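(* Consider ${\sf BubbleRank}$ (defined below) run with parameter $\delta\in(0,1)$ in a stochastic click bandit satisfying A1–A5 with $\alpha(1)>\dots>\alpha(K)>0$. For $t\in[n]$ let $$\mathbf{P}_t=\{(i,j)\in[K]^2: i<j,\ |\bar{\mathbf{R}}_t^{-1}(i)-\bar{\mathbf{R}}_t^{-1}(j)|=1,\ \mathbf{s}_{t-1}(i,j)\le2\sqrt{\mathbf{n}_{t-1}(i,j)\log(1/\delta)}\}$$ and let $\mathbf{\Delta}_t$ be the maximum of the attraction gap $\Delta(\mathcal{R})$ over all lists $\mathcal{R}$ that ${\sf BubbleRank}$ may display at time $t$ (over its randomization). Then on the event $\mathcal{E}$ defined below, for every $t\in[n]$, $$\mathbf{\Delta}_t\le3\sum_{i=1}^K\sum_{j=i+1}^K\mathbb{1}\{(i,j)\in\mathbf{P}_t\}(\alpha(i)-\alpha(j)).$$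
   Context: Model. Items $[K]$; a list $\mathcal{R}$ orders all $K$ items, $\mathcal{R}(k)$ is the item at position $k$, $\mathcal{R}^{-1}(i)$ the position of $i$; $\Pi_K$ the set of lists. At time $t$, $(\mathbf{A}_t,\mathbf{X}_t)\in\{0,1\}^K\times\{0,1\}^{\Pi_K\times[K]}$ is drawn i.i.d. from a product distribution; the learner displays $\mathbf{R}_t$ and observes $\mathbf{c}_t(k)=\mathbf{X}_t(\mathbf{R}_t,k)\mathbf{A}_t(\mathbf{R}_t(k))$. $\alpha=\mathbb{E}[\mathbf{A}_t]$, $\chi=\mathbb{E}[\mathbf{X}_t]$, $r(\mathcal{R},\alpha,\chi)=\sum_k\chi(\mathcal{R},k)\alpha(\mathcal{R}(k))$, $\mathcal{R}^*=(1,\dots,K)$. Assumptions for all lists $\mathcal{R},\mathcal{R}'$ and positions $k<\ell$: (A1) $r(\mathcal{R},\alpha,\chi)\le r(\mathcal{R}^*,\alpha,\chi)$; (A2) $\{\mathcal{R}(1..k-1)\}=\{\mathcal{R}'(1..k-1)\}\Rightarrow\chi(\mathcal{R},k)=\chi(\mathcal{R}',k)$; (A3) $\chi(\mathcal{R},k)\ge\chi(\mathcal{R},\ell)$; (A4) if $\mathcal{R},\mathcal{R}'$ differ only by exchanging items at positions $k,\ell$, then $\alpha(\mathcal{R}(k))\le\alpha(\mathcal{R}(\ell))\iff\chi(\mathcal{R},\ell)\ge\chi(\mathcal{R}',\ell)$; (A5) $\chi(\mathcal{R},k)\ge\chi(\mathcal{R}^*,k)$. Attraction gap: $\Delta(\mathcal{R})=\sum_{k=1}^{K-1}\max\{\alpha(\mathcal{R}(k+1))-\alpha(\mathcal{R}(k)),0\}$.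 Algorithm ${\sf BubbleRank}$ (initial list $\mathcal{R}_0$, horizon $n$): $\mathbf{s}_0\equiv\mathbf{n}_0\equiv0$, $\bar{\mathbf{R}}_1=\mathcal{R}_0$. For $t=1,\dots,n$: $h=t\bmod2$, $\mathbf{R}_t\leftarrow\bar{\mathbf{R}}_t$; for $k=1,\dots,\lfloor(K-h)/2\rfloor$ with $i=\mathbf{R}_t(2k-1+h)$, $j=\mathbf{R}_t(2k+h)$: if $\mathbf{s}_{t-1}(i,j)\le2\sqrt{\mathbf{n}_{t-1}(i,j)\log(1/\delta)}$ exchange these two positions with probability $1/2$. Display $\mathbf{R}_t$, observe $\mathbf{c}_t$. $\mathbf{s}_t=\mathbf{s}_{t-1}$, $\mathbf{n}_t=\mathbf{n}_{t-1}$; for each such $k$ with $i=\mathbf{R}_t(2k-1+h)$, $j=\mathbf{R}_t(2k+h)$: if $|\mathbf{c}_t(2k-1+h)-\mathbf{c}_t(2k+h)|=1$, add $\mathbf{c}_t(2k-1+h)-\mathbf{c}_t(2k+h)$ to $\mathbf{s}_t(i,j)$, its negative to $\mathbf{s}_t(j,i)$, and $1$ to $\mathbf{n}_t(i,j),\mathbf{n}_t(j,i)$. Then $\bar{\mathbf{R}}_{t+1}=\bar{\mathbf{R}}_t$; for $k=1,\dots,K-1$ in order with $i=\bar{\mathbf{R}}_{t+1}(k)$, $j=\bar{\mathbf{R}}_{t+1}(k+1)$: if $\mathbf{s}_t(j,i)>2\sqrt{\mathbf{n}_t(j,i)\log(1/\delta)}$ exchange positions $k,k+1$ of $\bar{\mathbf{R}}_{t+1}$.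 Event $\mathcal{E}=\bigcap_{t\in[n]}(\mathcal{E}_{t,1}\cap\mathcal{E}_{t,2})$, where $\mathcal{E}_{t,1}$: for all $i<j$, $\frac{\alpha(i)-\alpha(j)}{\alpha(i)+\alpha(j)}\mathbf{n}_t(i,j)-2\sqrt{\mathbf{n}_t(i,j)\log(1/\delta)}\le\mathbf{s}_t(i,j)$; and $\mathcal{E}_{t,2}$: for all $i>j$, $\mathbf{s}_t(i,j)\le2\sqrt{\mathbf{n}_t(i,j)\log(1/\delta)}$. *)

theory Defs
  imports Complex_Main "HOL-Combinatorics.Permutations"
begin

(* Items are 1..K, positions are 1..K.  A list R : positions -> items is a
   permutation of {1..K} (identity outside {1..K}); R^{-1} is inv R. *)
definition lists_K :: "nat \<Rightarrow> (nat \<Rightarrow> nat) set" where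
  "lists_K K = {R. R permutes {1..K}}"

definition reward :: "nat \<Rightarrow> (nat \<Rightarrow> real) \<Rightarrow> ((nat \<Rightarrow> nat) \<Rightarrow> nat \<Rightarrow> real) \<Rightarrow> (nat \<Rightarrow> nat) \<Rightarrow> real" where
  "reward K \<alpha> \<chi> R = (\<Sum>k=1..K. \<chi> R k * \<alpha> (R k))"

definition swap_pos :: "(nat \<Rightarrow> nat) \<Rightarrow> nat \<Rightarrow> nat \<Rightarrow> (nat \<Rightarrow> nat)" where
  "swap_pos R k l = R(k := R l, l := R k)"

definition thr :: "real \<Rightarrow> nat \<Rightarrow> real" where
  "thr \<delta> m = 2 * sqrt (real m * ln (1 / \<delta>))"

definition attr_gap :: "nat \<Rightarrow> (nat \<Rightarrow> real) \<Rightarrow> (nat \<Rightarrow> nat) \<Rightarrow> real" where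
  "attr_gap K \<alpha> R = (\<Sum>k=1..K-1. max (\<alpha> (R (k+1)) - \<alpha> (R k)) 0)"

(* The displayed list R_t, given h = t mod 2, the current list Rbar_t, the
   statistics s_{t-1}, n_{t-1} and the outcome of the fair coins
   (sel k = True iff the k-th coin says "exchange"). *)
definition display_list :: "nat \<Rightarrow> real \<Rightarrow> nat \<Rightarrow> (nat \<Rightarrow> nat) \<Rightarrow> (nat \<Rightarrow> nat \<Rightarrow> int)
    \<Rightarrow> (nat \<Rightarrow> nat \<Rightarrow> nat) \<Rightarrow> (nat \<Rightarrow> bool) \<Rightarrow> (nat \<Rightarrow> nat)" where
  "display_list K \<delta> h Rb s n sel =
     foldl (\<lambda>R k. let i = R (2*k - 1 + h); j = R (2*k + h) in
                 if real_of_int (s i j) \<le> thr \<delta> (n i j) \<and> sel k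
                 then swap_pos R (2*k - 1 + h) (2*k + h) else R)
           Rb [1..<(K - h) div 2 + 1]"

definition displayable :: "nat \<Rightarrow> real \<Rightarrow> nat \<Rightarrow> (nat \<Rightarrow> nat) \<Rightarrow> (nat \<Rightarrow> nat \<Rightarrow> int)
    \<Rightarrow> (nat \<Rightarrow> nat \<Rightarrow> nat) \<Rightarrow> (nat \<Rightarrow> nat) set" where
  "displayable K \<delta> h Rb s n = {display_list K \<delta> h Rb s n sel | sel. True}"

definition upd2 :: "('a \<Rightarrow> 'a \<Rightarrow> 'b) \<Rightarrow> 'a \<Rightarrow> 'a \<Rightarrow> 'b \<Rightarrow> ('a \<Rightarrow> 'a \<Rightarrow> 'b)" where
  "upd2 f i j v = f(i := (f i)(j := v))"

definition update_stats :: "nat \<Rightarrow> nat \<Rightarrow> (nat \<Rightarrow> nat) \<Rightarrow> (nat \<Rightarrow> int)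
    \<Rightarrow> (nat \<Rightarrow> nat \<Rightarrow> int) \<times> (nat \<Rightarrow> nat \<Rightarrow> nat)
    \<Rightarrow> (nat \<Rightarrow> nat \<Rightarrow> int) \<times> (nat \<Rightarrow> nat \<Rightarrow> nat)" where
  "update_stats K h R c sn =
     foldl (\<lambda>(s, n) k. let p = 2*k - 1 + h; q = 2*k + h; i = R p; j = R q; d = c p - c q in
                 if \<bar>d\<bar> = 1
                 then (upd2 (upd2 s i j (s i j + d)) j i (s j i - d),
                       upd2 (upd2 n i j (n i j + 1)) j i (n j i + 1))
                 else (s, n))
           sn [1..<(K - h) div 2 + 1]"

definition bubble_pass :: "nat \<Rightarrow> real \<Rightarrow> (nat \<Rightarrow> nat \<Rightarrow> int) \<Rightarrow> (nat \<Rightarrow> nat \<Rightarrow> nat)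
    \<Rightarrow> (nat \<Rightarrow> nat) \<Rightarrow> (nat \<Rightarrow> nat)" where
  "bubble_pass K \<delta> s n Rb =
     foldl (\<lambda>R k. let i = R k; j = R (Suc k) in
                 if real_of_int (s j i) > thr \<delta> (n j i) then swap_pos R k (Suc k) else R)
           Rb [1..<K]"

(* Trajectory of BubbleRank.  coin u k: outcome of the fair coin for pair k at time u;
   A u i = A_u(i); X u R k = X_u(R, k).
   traj ... t = (Rbar_{t+1}, s_t, n_t). *)
fun traj :: "nat \<Rightarrow> real \<Rightarrow> (nat \<Rightarrow> nat) \<Rightarrow> (nat \<Rightarrow> nat \<Rightarrow> bool) \<Rightarrow> (nat \<Rightarrow> nat \<Rightarrow> bool)
    \<Rightarrow> (nat \<Rightarrow> (nat \<Rightarrow> nat) \<Rightarrow> nat \<Rightarrow> bool) \<Rightarrow> nat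
    \<Rightarrow> (nat \<Rightarrow> nat) \<times> (nat \<Rightarrow> nat \<Rightarrow> int) \<times> (nat \<Rightarrow> nat \<Rightarrow> nat)" where
  "traj K \<delta> R0 coin A X 0 = (R0, (\<lambda>_ _. 0), (\<lambda>_ _. 0))"
| "traj K \<delta> R0 coin A X (Suc t) =
     (let (Rb, s, n) = traj K \<delta> R0 coin A X t;
          u = Suc t;
          h = u mod 2;
          R = display_list K \<delta> h Rb s n (coin u);
          c = (\<lambda>k. if X u R k \<and> A u (R k) then 1 else 0 :: int);
          (s', n') = update_stats K h R c (s, n)
      in (bubble_pass K \<delta> s' n' Rb, s', n'))"

definition Rbar_at where "Rbar_at K \<delta> R0 coin A X t = fst (traj K \<delta> R0 coin A X (t - 1))"
definition s_at where "s_at K \<delta> R0 coin A X t = fst (snd (traj K \<delta> R0 coin A X t))"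
definition n_at where "n_at K \<delta> R0 coin A X t = snd (snd (traj K \<delta> R0 coin A X t))"

definition event_E :: "nat \<Rightarrow> real \<Rightarrow> (nat \<Rightarrow> real) \<Rightarrow> nat
    \<Rightarrow> (nat \<Rightarrow> nat \<Rightarrow> nat \<Rightarrow> int) \<Rightarrow> (nat \<Rightarrow> nat \<Rightarrow> nat \<Rightarrow> nat) \<Rightarrow> bool" where
  "event_E K \<delta> \<alpha> N s n \<longleftrightarrow>
     (\<forall>t\<in>{1..N}.
        (\<forall>i\<in>{1..K}. \<forall>j\<in>{1..K}. i < j \<longrightarrow>
           (\<alpha> i - \<alpha> j) / (\<alpha> i + \<alpha> j) * real (n t i j) - thr \<delta> (n t i j) \<le> real_of_int (s t i j)) \<and>
        (\<forall>i\<in>{1..K}. \<forall>j\<in>{1..K}. i > j \<longrightarrow>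
           real_of_int (s t i j) \<le> thr \<delta> (n t i j)))"

(* the set P_t, given Rbar_t, s_{t-1}, n_{t-1} *)
definition P_set :: "nat \<Rightarrow> real \<Rightarrow> (nat \<Rightarrow> nat) \<Rightarrow> (nat \<Rightarrow> nat \<Rightarrow> int) \<Rightarrow> (nat \<Rightarrow> nat \<Rightarrow> nat)
    \<Rightarrow> (nat \<times> nat) set" where
  "P_set K \<delta> Rb s n = {(i, j). i \<in> {1..K} \<and> j \<in> {1..K} \<and> i < j \<and>
      \<bar>int (inv Rb i) - int (inv Rb j)\<bar> = 1 \<and> real_of_int (s i j) \<le> thr \<delta> (n i j)}"

end

theory Submission
  imports Defs
begin

(*
  Call (a, b) an inversion of a list if a is shown before the more attractive item b.
  The invariant behind the bound: BubbleRank never has confident evidence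
  (s(b, a) above the confidence radius) for the better item of an inversion of the current
  list.  Statistics of a pair change only while it is displayed, hence adjacent in the
  current list; once the better item becomes confident, the bubble pass exchanges the pair,
  because on E_{t,2} the upper item cannot have been moved up before, and the pass never
  creates an inversion.  Consequently every adjacent inversion of the current list lies
  in P_t.  A displayed list permutes the current one by disjoint exchanges of adjacent
  uncertain pairs, so each position moves by at most one: the gap between positions k and
  k+1 telescopes over at most three adjacent pairs of the current list, each contributing
  either nothing or a pair of P_t, and summing over k gives the factor 3.
*)

section \<open>Displayed lists and statistics\<close>

definition beats :: "real \<Rightarrow> (nat \<Rightarrow> nat \<Rightarrow> int) \<Rightarrow> (nat \<Rightarrow> nat \<Rightarrow> nat) \<Rightarrow> nat \<Rightarrow> nat \<Rightarrow> bool" where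
  "beats \<delta> s n i j \<longleftrightarrow> thr \<delta> (n i j) < real_of_int (s i j)"

lemma not_beats_iff: "\<not> beats \<delta> s n i j \<longleftrightarrow> real_of_int (s i j) \<le> thr \<delta> (n i j)"
  by (simp add: beats_def not_less)

lemma swap_pos_eq_comp_transpose: "swap_pos R k l = R \<circ> transpose k l"
  by (auto simp: swap_pos_def transpose_def fun_eq_iff)

(* Pair k occupies the positions 2k - 1 + h and 2k + h; for k = Suc k' these are Suc (2k' + h)
   and Suc (Suc (2k' + h)). *)
fun pair_swaps :: "nat \<Rightarrow> nat \<Rightarrow> (nat \<Rightarrow> bool) \<Rightarrow> nat \<Rightarrow> nat" where
  "pair_swaps h 0 P = id"
| "pair_swaps h (Suc k) P = pair_swaps h k P \<circ>
     (if P (Suc k) then transpose (Suc (2*k + h)) (Suc (Suc (2*k + h))) else id)"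

lemma pair_swaps_above: "2*a + h < m \<Longrightarrow> pair_swaps h a P m = m"
  by (induction a arbitrary: m) auto

lemma display_list_eq_pair_swaps:
  "display_list K \<delta> h Rb s n sel =
     Rb \<circ> pair_swaps h ((K - h) div 2) (\<lambda>k. \<not> beats \<delta> s n (Rb (2*k - 1 + h)) (Rb (2*k + h)) \<and> sel k)"
proof -
  define P where "P k \<longleftrightarrow> \<not> beats \<delta> s n (Rb (2*k - 1 + h)) (Rb (2*k + h)) \<and> sel k" for k
  define step where "step = (\<lambda>R k. let i = R (2*k - 1 + h); j = R (2*k + h) in
                 if real_of_int (s i j) \<le> thr \<delta> (n i j) \<and> sel k
                 then swap_pos R (2*k - 1 + h) (2*k + h) else R)"
  have "foldl step Rb [1..<Suc a] = Rb \<circ> pair_swaps h a P" for a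
  proof (induction a)
    case (Suc a)
    let ?R = "Rb \<circ> pair_swaps h a P"
    have untouched: "?R (Suc (2*a + h)) = Rb (Suc (2*a + h))" "?R (Suc (Suc (2*a + h))) = Rb (Suc (Suc (2*a + h)))"
      by (simp_all add: pair_swaps_above)
    have "foldl step Rb [1..<Suc (Suc a)] = step (foldl step Rb [1..<Suc a]) (Suc a)" by simp
    also have "\<dots> = step ?R (Suc a)" by (simp only: Suc.IH)
    also have "\<dots> = Rb \<circ> pair_swaps h (Suc a) P"
      using untouched by (auto simp: step_def P_def not_beats_iff swap_pos_eq_comp_transpose o_assoc Let_def)
    finally show ?case .
  qed simp
  then show ?thesis unfolding display_list_def step_def[symmetric] P_def by simp
qed

lemma pair_swaps_permutes: "2*a + h \<le> K \<Longrightarrow> pair_swaps h a P permutes {1..K}"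
  by (induction a) (auto intro!: permutes_compose permutes_swap_id simp: permutes_id)

lemma display_pair_swaps_permutes: "pair_swaps h ((K - h) div 2) P permutes {1..K}"
proof (cases "(K - h) div 2 = 0")
  case False
  then show ?thesis by (intro pair_swaps_permutes) linarith
qed (simp add: permutes_id)

lemma display_list_permutes:
  "Rb permutes {1..K} \<Longrightarrow> display_list K \<delta> h Rb s n sel permutes {1..K}"
  unfolding display_list_eq_pair_swaps by (rule permutes_compose[OF display_pair_swaps_permutes])

lemma pair_swaps_moves_by_one: "pair_swaps h a P m \<le> Suc m \<and> m \<le> Suc (pair_swaps h a P m)"
proof (induction a arbitrary: m)
  case (Suc a)
  show ?case
  proof (cases "P (Suc a) \<and> (m = Suc (2*a + h) \<or> m = Suc (Suc (2*a + h)))")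
    case True
    then show ?thesis by (auto simp: pair_swaps_above)
  next
    case False
    then show ?thesis using Suc.IH[of m] by (auto simp: transpose_def)
  qed
qed simp

lemma pair_swaps_up: "pair_swaps h a P m = Suc m \<Longrightarrow> \<exists>k\<in>{1..a}. P k \<and> m = 2*k - 1 + h"
proof (induction a arbitrary: m)
  case (Suc a)
  show ?case
  proof (cases "P (Suc a) \<and> (m = Suc (2*a + h) \<or> m = Suc (Suc (2*a + h)))")
    case True
    with Suc.prems have "m = Suc (2*a + h)" by (auto simp: pair_swaps_above)
    with True show ?thesis by (intro bexI[of _ "Suc a"]) auto
  next
    case False
    then have "pair_swaps h a P m = Suc m" using Suc.prems by (auto simp: transpose_def split: if_splits)
    then show ?thesis using Suc.IH by force
  qed
qed simp

lemma pair_swaps_image_pair: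
  "k \<in> {1..a} \<Longrightarrow> pair_swaps h a P ` {2*k - 1 + h, 2*k + h} = {2*k - 1 + h, 2*k + h}"
proof (induction a)
  case (Suc a)
  show ?case
  proof (cases "k = Suc a")
    case True
    then show ?thesis by (auto simp: pair_swaps_above)
  next
    case False
    with Suc have "pair_swaps h a P ` {2*k - 1 + h, 2*k + h} = {2*k - 1 + h, 2*k + h}" by simp
    moreover have "2*k + h < Suc (2*a + h)" using False Suc.prems by simp
    ultimately show ?thesis by (auto simp: transpose_def)
  qed
qed simp

lemma display_list_pair:
  assumes "k \<in> {1..(K - h) div 2}"
  shows "{display_list K \<delta> h Rb s n sel (2*k - 1 + h), display_list K \<delta> h Rb s n sel (2*k + h)}
           = {Rb (2*k - 1 + h), Rb (2*k + h)}"
proof -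
  let ?\<tau> = "pair_swaps h ((K - h) div 2) (\<lambda>k. \<not> beats \<delta> s n (Rb (2*k - 1 + h)) (Rb (2*k + h)) \<and> sel k)"
  have "(Rb \<circ> ?\<tau>) ` {2*k - 1 + h, 2*k + h} = Rb ` {2*k - 1 + h, 2*k + h}"
    by (simp only: image_comp[symmetric] pair_swaps_image_pair[OF assms])
  then show ?thesis unfolding display_list_eq_pair_swaps by simp
qed

lemma update_stats_changes_only_displayed_pairs:
  assumes "update_stats K h R c (s, n) = (s', n')" and "s' a b \<noteq> s a b \<or> n' a b \<noteq> n a b"
  shows "\<exists>k\<in>{1..(K - h) div 2}. {a, b} = {R (2*k - 1 + h), R (2*k + h)}"
proof (rule ccontr)
  define step :: "(nat \<Rightarrow> nat \<Rightarrow> int) \<times> (nat \<Rightarrow> nat \<Rightarrow> nat) \<Rightarrow> nat \<Rightarrow> _"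
    where "step = (\<lambda>(s, n) k. let p = 2*k - 1 + h; q = 2*k + h; i = R p; j = R q; d = c p - c q in
                 if \<bar>d\<bar> = 1
                 then (upd2 (upd2 s i j (s i j + d)) j i (s j i - d),
                       upd2 (upd2 n i j (n i j + 1)) j i (n j i + 1))
                 else (s, n))"
  have unchanged: "fst (foldl step sn ks) a b = fst sn a b \<and> snd (foldl step sn ks) a b = snd sn a b"
    if "\<forall>k\<in>set ks. {a, b} \<noteq> {R (2*k - 1 + h), R (2*k + h)}"
    for sn :: "(nat \<Rightarrow> nat \<Rightarrow> int) \<times> (nat \<Rightarrow> nat \<Rightarrow> nat)" and ks
    using that
  proof (induction ks arbitrary: sn)
    case (Cons k ks)
    then show ?case by (auto simp: step_def Let_def upd2_def doubleton_eq_iff split: prod.splits)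
  qed simp
  assume "\<not> ?thesis"
  then have "\<forall>k\<in>set [1..<(K - h) div 2 + 1]. {a, b} \<noteq> {R (2*k - 1 + h), R (2*k + h)}"
    by (auto simp del: upt_Suc)
  from unchanged[OF this, of "(s, n)"] show False
    using assms unfolding update_stats_def step_def[symmetric] by auto
qed

section \<open>Inversions and the bubble pass\<close>

(* The half E_{t,2} of the event E; it is the only part of E the argument needs. *)
definition event_E2 :: "nat \<Rightarrow> real \<Rightarrow> (nat \<Rightarrow> nat \<Rightarrow> int) \<Rightarrow> (nat \<Rightarrow> nat \<Rightarrow> nat) \<Rightarrow> bool" where
  "event_E2 K \<delta> s n \<longleftrightarrow> (\<forall>i\<in>{1..K}. \<forall>j\<in>{1..K}. j < i \<longrightarrow> \<not> beats \<delta> s n i j)"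

(* Items are numbered by decreasing attraction, so b < a means that b is the better item. *)
definition inverted :: "nat \<Rightarrow> (nat \<Rightarrow> nat) \<Rightarrow> nat \<Rightarrow> nat \<Rightarrow> bool" where
  "inverted K R a b \<longleftrightarrow> (\<exists>p q. 1 \<le> p \<and> p < q \<and> q \<le> K \<and> R p = a \<and> R q = b \<and> b < a)"

definition inversions_unconfirmed ::
    "nat \<Rightarrow> real \<Rightarrow> (nat \<Rightarrow> nat) \<Rightarrow> (nat \<Rightarrow> nat \<Rightarrow> int) \<Rightarrow> (nat \<Rightarrow> nat \<Rightarrow> nat) \<Rightarrow> bool" where
  "inversions_unconfirmed K \<delta> R s n \<longleftrightarrow> (\<forall>a b. inverted K R a b \<longrightarrow> \<not> beats \<delta> s n b a)"

lemma permutes_interval_range: "R permutes {1..K} \<Longrightarrow> 1 \<le> m \<Longrightarrow> m \<le> K \<Longrightarrow> 1 \<le> R m \<and> R m \<le> K"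
  using permutes_in_image[of R "{1..K}" m] by simp

lemma inverted_positions_less: "inj R \<Longrightarrow> inverted K R (R p) (R q) \<Longrightarrow> p < q"
  unfolding inverted_def by (auto dest: injD)

definition bubble_step ::
    "real \<Rightarrow> (nat \<Rightarrow> nat \<Rightarrow> int) \<Rightarrow> (nat \<Rightarrow> nat \<Rightarrow> nat) \<Rightarrow> (nat \<Rightarrow> nat) \<Rightarrow> nat \<Rightarrow> nat \<Rightarrow> nat" where
  "bubble_step \<delta> s n R k = (if beats \<delta> s n (R (Suc k)) (R k) then R \<circ> transpose k (Suc k) else R)"

lemma bubble_pass_eq_foldl: "bubble_pass K \<delta> s n R = foldl (bubble_step \<delta> s n) R [1..<K]"
proof -
  have "(\<lambda>R k. let i = R k; j = R (Suc k) in
          if real_of_int (s j i) > thr \<delta> (n j i) then swap_pos R k (Suc k) else R) = bubble_step \<delta> s n"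
    by (auto simp: fun_eq_iff bubble_step_def beats_def swap_pos_eq_comp_transpose Let_def)
  then show ?thesis unfolding bubble_pass_def by simp
qed

lemma bubble_step_permutes:
  "R permutes {1..K} \<Longrightarrow> 1 \<le> k \<Longrightarrow> k < K \<Longrightarrow> bubble_step \<delta> s n R k permutes {1..K}"
  by (auto simp: bubble_step_def intro!: permutes_compose permutes_swap_id)

lemma bubble_steps_permute:
  "R permutes {1..K} \<Longrightarrow> \<forall>k\<in>set ks. 1 \<le> k \<and> k < K \<Longrightarrow> foldl (bubble_step \<delta> s n) R ks permutes {1..K}"
proof (induction ks arbitrary: R)
  case (Cons k ks)
  then show ?case using bubble_step_permutes[of R K k] by simp
qed simp

lemma bubble_pass_permutes: "R permutes {1..K} \<Longrightarrow> bubble_pass K \<delta> s n R permutes {1..K}"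
  unfolding bubble_pass_eq_foldl by (rule bubble_steps_permute) auto

lemma bubble_steps_frame: "\<forall>k\<in>set ks. Suc k < m \<Longrightarrow> foldl (bubble_step \<delta> s n) R ks m = R m"
  by (induction ks arbitrary: R) (auto simp: bubble_step_def transpose_def)

lemma bubble_step_no_new_inversion:
  assumes R: "R permutes {1..K}" and k: "1 \<le> k" "k < K" and E: "event_E2 K \<delta> s n"
    and inv: "inverted K (bubble_step \<delta> s n R k) a b"
  shows "inverted K R a b"
proof (cases "beats \<delta> s n (R (Suc k)) (R k)")
  case True
  have "R k \<in> {1..K}" "R (Suc k) \<in> {1..K}"
    using permutes_interval_range[OF R, of k] permutes_interval_range[OF R, of "Suc k"] k by auto
  with True E have ordered: "\<not> R k < R (Suc k)" unfolding event_E2_def by blast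
  from inv True obtain p q where pq: "1 \<le> p" "p < q" "q \<le> K" "b < a"
      "R (transpose k (Suc k) p) = a" "R (transpose k (Suc k) q) = b"
    unfolding inverted_def bubble_step_def by auto
  show ?thesis
  proof (cases "p = k \<and> q = Suc k")
    case True
    with pq ordered show ?thesis by auto
  next
    case False
    with pq k have "1 \<le> transpose k (Suc k) p \<and> transpose k (Suc k) p < transpose k (Suc k) q
        \<and> transpose k (Suc k) q \<le> K"
      by (auto simp: transpose_def)
    with pq show ?thesis unfolding inverted_def by blast
  qed
qed (use inv in \<open>simp add: bubble_step_def\<close>)

lemma bubble_steps_no_new_inversion:
  "R permutes {1..K} \<Longrightarrow> \<forall>k\<in>set ks. 1 \<le> k \<and> k < K \<Longrightarrow> event_E2 K \<delta> s n \<Longrightarrow>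
     inverted K (foldl (bubble_step \<delta> s n) R ks) a b \<Longrightarrow> inverted K R a b"
proof (induction ks arbitrary: R)
  case (Cons k ks)
  then show ?case using bubble_step_permutes[of R K k] bubble_step_no_new_inversion[of R K k] by simp
qed simp

lemma bubble_prefix_keeps_item:
  assumes R: "R permutes {1..K}" and E: "event_E2 K \<delta> s n" and m: "1 \<le> m" "m \<le> K"
    and stays: "\<forall>y. inverted K R y (R m) \<longrightarrow> \<not> beats \<delta> s n (R m) y"
  shows "foldl (bubble_step \<delta> s n) R [1..<m] m = R m"
proof (cases "m = 1")
  case False
  then obtain l where l: "m = Suc l" "1 \<le> l" using m by (cases m) auto
  define R' where "R' = foldl (bubble_step \<delta> s n) R [1..<l]"
  have R'm: "R' m = R m" unfolding R'_def by (rule bubble_steps_frame) (auto simp: l)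
  have R'p: "R' permutes {1..K}" unfolding R'_def using R m l by (intro bubble_steps_permute) auto
  have "\<not> beats \<delta> s n (R m) (R' l)"
  proof
    assume b: "beats \<delta> s n (R m) (R' l)"
    have ranges: "R m \<in> {1..K}" "R' l \<in> {1..K}"
      using permutes_interval_range[OF R, of m] permutes_interval_range[OF R'p, of l] m l by auto
    have "R m \<noteq> R' l" using injD[OF permutes_inj[OF R'p], of m l] R'm l by auto
    moreover have "\<not> R' l < R m" using E b ranges unfolding event_E2_def by blast
    ultimately have "R m < R' l" by simp
    then have "inverted K R' (R' l) (R m)"
      unfolding inverted_def using l m R'm by (intro exI[of _ l] exI[of _ m]) auto
    then have "inverted K R (R' l) (R m)"
      unfolding R'_def by (rule bubble_steps_no_new_inversion[OF R _ E, rotated]) (use m l in auto)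
    with stays b show False by blast
  qed
  then show ?thesis using R'm l by (simp add: R'_def bubble_step_def)
qed simp

lemma bubble_pass_fixes_confirmed_inversion:
  assumes R: "R permutes {1..K}" and E: "event_E2 K \<delta> s n" and m: "1 \<le> m" "m < K"
    and confirmed: "beats \<delta> s n (R (Suc m)) (R m)"
    and stays: "\<forall>y. inverted K R y (R m) \<longrightarrow> \<not> beats \<delta> s n (R m) y"
  shows "\<not> inverted K (bubble_pass K \<delta> s n R) (R m) (R (Suc m))"
proof
  define R1 where "R1 = foldl (bubble_step \<delta> s n) R [1..<m]"
  define R2 where "R2 = bubble_step \<delta> s n R1 m"
  have "R1 m = R m" unfolding R1_def using bubble_prefix_keeps_item[OF R E] m stays by simp
  moreover have "R1 (Suc m) = R (Suc m)" unfolding R1_def by (rule bubble_steps_frame) auto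
  ultimately have R2: "R2 m = R (Suc m)" "R2 (Suc m) = R m"
    using confirmed by (simp_all add: R2_def bubble_step_def)
  have R2p: "R2 permutes {1..K}"
    unfolding R2_def R1_def using R m by (intro bubble_step_permutes bubble_steps_permute) auto
  have "[1..<K] = [1..<m] @ m # [Suc m..<K]"
    using m by (metis le_add_diff_inverse less_imp_le_nat upt_add_eq_append upt_conv_Cons)
  then have pass: "bubble_pass K \<delta> s n R = foldl (bubble_step \<delta> s n) R2 [Suc m..<K]"
    by (simp add: bubble_pass_eq_foldl R1_def R2_def)
  assume "inverted K (bubble_pass K \<delta> s n R) (R m) (R (Suc m))"
  then have "inverted K R2 (R2 (Suc m)) (R2 m)"
    unfolding pass R2 by (rule bubble_steps_no_new_inversion[OF R2p _ E, rotated]) auto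
  then show False using inverted_positions_less[OF permutes_inj[OF R2p]] by force
qed

section \<open>The invariant\<close>

(* Rb m lies in a single displayed pair, {Rb m, Rb (Suc m)}, whose other item comes after it;
   all other statistics of Rb m are unchanged. *)
lemma inversions_before_displayed_pair_unconfirmed:
  assumes inj: "inj Rb" and inv: "inversions_unconfirmed K \<delta> Rb s n"
    and M: "\<forall>m\<in>M. Suc m \<notin> M"
    and changes: "\<And>a b. s' a b \<noteq> s a b \<or> n' a b \<noteq> n a b \<Longrightarrow> \<exists>m\<in>M. {a, b} = {Rb m, Rb (Suc m)}"
    and m: "m \<in> M" and y: "inverted K Rb y (Rb m)"
  shows "\<not> beats \<delta> s' n' (Rb m) y"
proof (cases "s' (Rb m) y = s (Rb m) y \<and> n' (Rb m) y = n (Rb m) y")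
  case True
  with y inv show ?thesis unfolding inversions_unconfirmed_def beats_def by auto
next
  case False
  then obtain m' where m': "m' \<in> M" and "{Rb m, y} = {Rb m', Rb (Suc m')}" using changes by blast
  then consider "m = m'" "y = Rb (Suc m)" | "m = Suc m'"
    using inj by (auto simp: doubleton_eq_iff dest: injD)
  then show ?thesis
  proof cases
    case 1
    with y show ?thesis using inverted_positions_less[OF inj] by force
  next
    case 2
    with m m' M show ?thesis by blast
  qed
qed

lemma bubble_pass_keeps_inversions_unconfirmed:
  assumes Rb: "Rb permutes {1..K}" and inv: "inversions_unconfirmed K \<delta> Rb s n"
    and E: "event_E2 K \<delta> s' n'"
    and M: "\<forall>m\<in>M. 1 \<le> m \<and> m < K \<and> Suc m \<notin> M"
    and changes: "\<And>a b. s' a b \<noteq> s a b \<or> n' a b \<noteq> n a b \<Longrightarrow> \<exists>m\<in>M. {a, b} = {Rb m, Rb (Suc m)}"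
  shows "inversions_unconfirmed K \<delta> (bubble_pass K \<delta> s' n' Rb) s' n'"
  unfolding inversions_unconfirmed_def
proof (intro allI impI notI)
  fix a b
  assume inv_out: "inverted K (bubble_pass K \<delta> s' n' Rb) a b" and confirmed: "beats \<delta> s' n' b a"
  have inj: "inj Rb" using Rb by (rule permutes_inj)
  have "inverted K Rb a b"
    using inv_out unfolding bubble_pass_eq_foldl
    by (rule bubble_steps_no_new_inversion[OF Rb _ E, rotated]) auto
  then have "\<not> beats \<delta> s n b a" using inv unfolding inversions_unconfirmed_def by blast
  with confirmed have "s' b a \<noteq> s b a \<or> n' b a \<noteq> n b a" by (auto simp: beats_def)
  then obtain m where m: "m \<in> M" and ba: "{b, a} = {Rb m, Rb (Suc m)}" using changes by blast
  have ab: "a = Rb m \<and> b = Rb (Suc m)"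
  proof (rule ccontr)
    assume "\<not> ?thesis"
    with ba \<open>inverted K Rb a b\<close> have "inverted K Rb (Rb (Suc m)) (Rb m)" by (auto simp: doubleton_eq_iff)
    then show False using inverted_positions_less[OF inj] by force
  qed
  have "\<forall>y. inverted K Rb y (Rb m) \<longrightarrow> \<not> beats \<delta> s' n' (Rb m) y"
    using inversions_before_displayed_pair_unconfirmed[OF inj inv _ changes m] M by blast
  moreover from m M have "1 \<le> m" "m < K" by auto
  ultimately show False
    using bubble_pass_fixes_confirmed_inversion[OF Rb E] ab confirmed inv_out by blast
qed

lemma BubbleRank_step_keeps_inversions_unconfirmed:
  assumes Rb: "Rb permutes {1..K}" and inv: "inversions_unconfirmed K \<delta> Rb s n"
    and stats: "update_stats K h (display_list K \<delta> h Rb s n sel) c (s, n) = (s', n')"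
    and E: "event_E2 K \<delta> s' n'"
  shows "inversions_unconfirmed K \<delta> (bubble_pass K \<delta> s' n' Rb) s' n'"
proof (rule bubble_pass_keeps_inversions_unconfirmed[OF Rb inv E])
  let ?M = "(\<lambda>k. 2*k - 1 + h) ` {1..(K - h) div 2}"
  show "\<forall>m\<in>?M. 1 \<le> m \<and> m < K \<and> Suc m \<notin> ?M"
    by auto presburger
  fix a b
  assume "s' a b \<noteq> s a b \<or> n' a b \<noteq> n a b"
  then obtain k where k: "k \<in> {1..(K - h) div 2}"
    and "{a, b} = {display_list K \<delta> h Rb s n sel (2*k - 1 + h), display_list K \<delta> h Rb s n sel (2*k + h)}"
    using update_stats_changes_only_displayed_pairs[OF stats] by blast
  then have "{a, b} = {Rb (2*k - 1 + h), Rb (Suc (2*k - 1 + h))}"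
    using display_list_pair[OF k] by simp
  with k show "\<exists>m\<in>?M. {a, b} = {Rb m, Rb (Suc m)}" by blast
qed

lemma BubbleRank_invariant:
  assumes R0: "R0 permutes {1..K}"
    and E: "\<forall>u\<in>{1..N}. event_E2 K \<delta> (s_at K \<delta> R0 coin A X u) (n_at K \<delta> R0 coin A X u)"
    and "u \<le> N"
  shows "Rbar_at K \<delta> R0 coin A X (Suc u) permutes {1..K} \<and>
    inversions_unconfirmed K \<delta> (Rbar_at K \<delta> R0 coin A X (Suc u)) (s_at K \<delta> R0 coin A X u) (n_at K \<delta> R0 coin A X u)"
  using \<open>u \<le> N\<close>
proof (induction u)
  case 0
  have "inversions_unconfirmed K \<delta> R0 (\<lambda>_ _. 0) (\<lambda>_ _. 0)"
    unfolding inversions_unconfirmed_def beats_def thr_def by simp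
  with R0 show ?case by (simp add: Rbar_at_def s_at_def n_at_def)
next
  case (Suc u)
  obtain Rb s n where tr: "traj K \<delta> R0 coin A X u = (Rb, s, n)" by (metis prod.exhaust)
  define h where "h = Suc u mod 2"
  define R where "R = display_list K \<delta> h Rb s n (coin (Suc u))"
  define c where "c = (\<lambda>k. if X (Suc u) R k \<and> A (Suc u) (R k) then 1 else 0 :: int)"
  obtain s' n' where stats: "update_stats K h R c (s, n) = (s', n')" by (metis prod.exhaust)
  have tr': "traj K \<delta> R0 coin A X (Suc u) = (bubble_pass K \<delta> s' n' Rb, s', n')"
    using tr stats unfolding h_def R_def c_def by (simp add: Let_def)
  have Rb: "Rb permutes {1..K}" and inv: "inversions_unconfirmed K \<delta> Rb s n"
    using Suc tr by (simp_all add: Rbar_at_def s_at_def n_at_def)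
  have "event_E2 K \<delta> (s_at K \<delta> R0 coin A X (Suc u)) (n_at K \<delta> R0 coin A X (Suc u))"
    using E Suc.prems by simp
  then have "event_E2 K \<delta> s' n'" unfolding s_at_def n_at_def tr' by simp
  with BubbleRank_step_keeps_inversions_unconfirmed[OF Rb inv stats[unfolded R_def]] bubble_pass_permutes[OF Rb]
  show ?case using tr' by (simp add: Rbar_at_def s_at_def n_at_def)
qed

section \<open>The attraction gap\<close>

lemma sum_neighbours_le:
  fixes w :: "nat \<Rightarrow> real"
  assumes w: "\<And>m. 0 \<le> w m"
  shows "(\<Sum>k=1..K-1. w (k - 1) + w k + w (Suc k)) \<le> 3 * (\<Sum>m\<le>K. w m)"
proof -
  have shifted: "(\<Sum>k=1..K-1. w (f k)) \<le> (\<Sum>m\<le>K. w m)"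
    if "inj_on f {1..K-1}" "f ` {1..K-1} \<subseteq> {..K}" for f
  proof -
    have "(\<Sum>k=1..K-1. w (f k)) = (\<Sum>m\<in>f ` {1..K-1}. w m)" unfolding sum.reindex[OF that(1)] by simp
    also have "\<dots> \<le> (\<Sum>m\<le>K. w m)" by (rule sum_mono2) (use that w in auto)
    finally show ?thesis .
  qed
  have "(\<Sum>k=1..K-1. w (k - 1)) \<le> (\<Sum>m\<le>K. w m)" by (rule shifted) (auto simp: inj_on_def)
  moreover have "(\<Sum>k=1..K-1. w k) \<le> (\<Sum>m\<le>K. w m)" using shifted[of id] by auto
  moreover have "(\<Sum>k=1..K-1. w (Suc k)) \<le> (\<Sum>m\<le>K. w m)" by (rule shifted) (auto simp: inj_on_def)
  ultimately show ?thesis by (simp add: sum.distrib)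
qed

lemma sum_adjacent_le_sum_pairs:
  fixes g :: "nat \<Rightarrow> nat \<Rightarrow> real"
  assumes Rb: "Rb permutes {1..K}" and g: "\<And>i j. 0 \<le> g i j"
  shows "(\<Sum>m=1..K-1. g (min (Rb m) (Rb (Suc m))) (max (Rb m) (Rb (Suc m))))
           \<le> (\<Sum>i=1..K. \<Sum>j=i+1..K. g i j)"
proof -
  define pair where "pair m = (min (Rb m) (Rb (Suc m)), max (Rb m) (Rb (Suc m)))" for m
  define pairs where "pairs = Sigma {1..K} (\<lambda>i. {i+1..K})"
  have inj: "inj Rb" using Rb by (rule permutes_inj)
  have min_max: "{min a b, max a b} = {a, b}" for a b :: nat by (auto simp: min_def max_def)
  have inj_pair: "inj_on pair {1..K-1}"
  proof (rule inj_onI)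
    fix m m' assume "pair m = pair m'"
    then have "{Rb m, Rb (Suc m)} = {Rb m', Rb (Suc m')}" unfolding pair_def by (metis min_max prod.inject)
    then show "m = m'" by (auto simp: doubleton_eq_iff inj_eq[OF inj])
  qed
  have "pair ` {1..K-1} \<subseteq> pairs"
  proof
    fix x assume "x \<in> pair ` {1..K-1}"
    then obtain m where m: "1 \<le> m" "m < K" "x = pair m" by auto
    have "Rb m \<noteq> Rb (Suc m)" by (simp add: inj_eq[OF inj])
    with m show "x \<in> pairs"
      using permutes_interval_range[OF Rb, of m] permutes_interval_range[OF Rb, of "Suc m"]
      unfolding pairs_def pair_def by auto
  qed
  have "(\<Sum>m=1..K-1. g (min (Rb m) (Rb (Suc m))) (max (Rb m) (Rb (Suc m))))
          = (\<Sum>x\<in>pair ` {1..K-1}. case_prod g x)"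
    unfolding sum.reindex[OF inj_pair] by (simp add: pair_def)
  also have "\<dots> \<le> (\<Sum>x\<in>pairs. case_prod g x)"
    by (rule sum_mono2) (use \<open>pair ` {1..K-1} \<subseteq> pairs\<close> g in \<open>auto simp: pairs_def\<close>)
  also have "\<dots> = (\<Sum>i=1..K. \<Sum>j=i+1..K. g i j)"
    unfolding pairs_def by (rule sum.Sigma[symmetric]) auto
  finally show ?thesis .
qed

lemma gap_le_neighbour_weights:
  fixes f w :: "nat \<Rightarrow> real"
  assumes \<tau>: "\<tau> permutes {1..K}" and moves: "\<And>m. \<tau> m \<le> Suc m \<and> m \<le> Suc (\<tau> m)"
    and w: "\<And>m. 0 \<le> w m"
    and ascent: "\<And>m. 1 \<le> m \<Longrightarrow> m < K \<Longrightarrow> f (Suc m) - f m \<le> w m"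
    and swapped: "\<And>m. \<tau> m = Suc m \<Longrightarrow> f m - f (Suc m) \<le> w m"
    and k: "1 \<le> k" "k < K"
  shows "max (f (\<tau> (Suc k)) - f (\<tau> k)) 0 \<le> w (k - 1) + w k + w (Suc k)"
proof (cases "\<tau> k < \<tau> (Suc k)")
  case True
  have "1 \<le> \<tau> k" "\<tau> (Suc k) \<le> K"
    using permutes_interval_range[OF \<tau>, of k] permutes_interval_range[OF \<tau>, of "Suc k"] k by auto
  have "f (\<tau> (Suc k)) - f (\<tau> k) = (\<Sum>m=\<tau> k..<\<tau> (Suc k). f (Suc m) - f m)"
    using True by (simp add: sum_Suc_diff')
  also have "\<dots> \<le> (\<Sum>m=\<tau> k..<\<tau> (Suc k). w m)"
    by (rule sum_mono) (use ascent \<open>1 \<le> \<tau> k\<close> \<open>\<tau> (Suc k) \<le> K\<close> in auto)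
  also have "\<dots> \<le> (\<Sum>m\<in>{k - 1, k, Suc k}. w m)"
    by (rule sum_mono2) (use moves[of k] moves[of "Suc k"] w in auto)
  also have "\<dots> = w (k - 1) + w k + w (Suc k)" using k by (cases k) (auto simp: algebra_simps)
  finally show ?thesis using w[of "k - 1"] w[of k] w[of "Suc k"] by simp
next
  case False
  have "\<tau> k \<noteq> \<tau> (Suc k)" using injD[OF permutes_inj[OF \<tau>], of k "Suc k"] by auto
  with False moves[of k] moves[of "Suc k"] have "\<tau> k = Suc k" "\<tau> (Suc k) = k" by auto
  with swapped[of k] w[of "k - 1"] w[of k] w[of "Suc k"] show ?thesis by simp
qed

definition P_weight ::
    "nat \<Rightarrow> real \<Rightarrow> (nat \<Rightarrow> real) \<Rightarrow> (nat \<Rightarrow> nat) \<Rightarrow> (nat \<Rightarrow> nat \<Rightarrow> int) \<Rightarrow> (nat \<Rightarrow> nat \<Rightarrow> nat)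
      \<Rightarrow> nat \<Rightarrow> nat \<Rightarrow> real" where
  "P_weight K \<delta> \<alpha> Rb s n i j = (if (i, j) \<in> P_set K \<delta> Rb s n then 1 else 0) * (\<alpha> i - \<alpha> j)"

lemma P_weight_nonneg:
  assumes "\<forall>i\<in>{1..K}. \<forall>j\<in>{1..K}. i < j \<longrightarrow> \<alpha> j < \<alpha> i"
  shows "0 \<le> P_weight K \<delta> \<alpha> Rb s n i j"
  using assms unfolding P_weight_def P_set_def by (auto simp: less_imp_le)

lemma adjacent_gap_le_P_weight:
  fixes \<alpha> :: "nat \<Rightarrow> real"
  assumes Rb: "Rb permutes {1..K}"
    and alpha_dec: "\<forall>i\<in>{1..K}. \<forall>j\<in>{1..K}. i < j \<longrightarrow> \<alpha> j < \<alpha> i"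
    and m: "1 \<le> m" "m < K" and xy: "{x, y} = {Rb m, Rb (Suc m)}"
    and uncertain: "y < x \<Longrightarrow> \<not> beats \<delta> s n y x"
  shows "\<alpha> y - \<alpha> x \<le> P_weight K \<delta> \<alpha> Rb s n (min (Rb m) (Rb (Suc m))) (max (Rb m) (Rb (Suc m)))"
proof -
  have ranges: "x \<in> {1..K}" "y \<in> {1..K}"
    using xy m permutes_interval_range[OF Rb, of m] permutes_interval_range[OF Rb, of "Suc m"]
    by (auto simp: doubleton_eq_iff)
  show ?thesis
  proof (cases "y < x")
    case True
    have "inv Rb (Rb m) = m" "inv Rb (Rb (Suc m)) = Suc m" by (simp_all add: permutes_inverses(2)[OF Rb])
    with True uncertain ranges xy have "(y, x) \<in> P_set K \<delta> Rb s n"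
      unfolding P_set_def not_beats_iff by (auto simp: doubleton_eq_iff)
    moreover have "min (Rb m) (Rb (Suc m)) = y" "max (Rb m) (Rb (Suc m)) = x"
      using xy True by (auto simp: doubleton_eq_iff)
    ultimately show ?thesis unfolding P_weight_def by simp
  next
    case False
    with alpha_dec ranges have "\<alpha> y \<le> \<alpha> x" by (cases "x = y") (auto simp: less_imp_le)
    with P_weight_nonneg[OF alpha_dec] show ?thesis by (meson diff_le_0_iff_le order_trans)
  qed
qed

lemma attr_gap_display_list_le:
  fixes \<alpha> :: "nat \<Rightarrow> real"
  assumes Rb: "Rb permutes {1..K}" and inv: "inversions_unconfirmed K \<delta> Rb s n"
    and alpha_dec: "\<forall>i\<in>{1..K}. \<forall>j\<in>{1..K}. i < j \<longrightarrow> \<alpha> j < \<alpha> i"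
  shows "attr_gap K \<alpha> (display_list K \<delta> h Rb s n sel)
    \<le> 3 * (\<Sum>i=1..K. \<Sum>j=i+1..K. (if (i, j) \<in> P_set K \<delta> Rb s n then 1 else 0) * (\<alpha> i - \<alpha> j))"
proof -
  let ?g = "P_weight K \<delta> \<alpha> Rb s n"
  define w where "w m = (if 1 \<le> m \<and> m < K then ?g (min (Rb m) (Rb (Suc m))) (max (Rb m) (Rb (Suc m))) else 0)"
    for m
  have w: "0 \<le> w m" for m unfolding w_def using P_weight_nonneg[OF alpha_dec] by simp
  define P where "P k \<longleftrightarrow> \<not> beats \<delta> s n (Rb (2*k - 1 + h)) (Rb (2*k + h)) \<and> sel k" for k
  define \<tau> where "\<tau> = pair_swaps h ((K - h) div 2) P"
  have R: "display_list K \<delta> h Rb s n sel = Rb \<circ> \<tau>"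
    unfolding \<tau>_def P_def by (rule display_list_eq_pair_swaps)
  have ascent: "\<alpha> (Rb (Suc m)) - \<alpha> (Rb m) \<le> w m" if "1 \<le> m" "m < K" for m
    unfolding w_def using that
  proof (simp, intro adjacent_gap_le_P_weight[OF Rb alpha_dec that])
    assume "Rb (Suc m) < Rb m"
    with that have "inverted K Rb (Rb m) (Rb (Suc m))"
      unfolding inverted_def by (intro exI[of _ m] exI[of _ "Suc m"]) auto
    with inv show "\<not> beats \<delta> s n (Rb (Suc m)) (Rb m)" unfolding inversions_unconfirmed_def by blast
  qed auto
  have swapped: "\<alpha> (Rb m) - \<alpha> (Rb (Suc m)) \<le> w m" if up: "\<tau> m = Suc m" for m
  proof -
    obtain j where j: "j \<in> {1..(K - h) div 2}" "P j" "m = 2*j - 1 + h"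
      using pair_swaps_up[OF up[unfolded \<tau>_def]] by blast
    then have m: "1 \<le> m" "m < K" and "Suc m = 2*j + h" by auto
    with j have "\<not> beats \<delta> s n (Rb m) (Rb (Suc m))" by (simp add: P_def)
    then have "\<alpha> (Rb m) - \<alpha> (Rb (Suc m)) \<le> ?g (min (Rb m) (Rb (Suc m))) (max (Rb m) (Rb (Suc m)))"
      by (intro adjacent_gap_le_P_weight[OF Rb alpha_dec m]) (auto simp: insert_commute)
    with m show ?thesis unfolding w_def by simp
  qed
  have gap: "max (\<alpha> (Rb (\<tau> (Suc k))) - \<alpha> (Rb (\<tau> k))) 0 \<le> w (k - 1) + w k + w (Suc k)"
    if "1 \<le> k" "k < K" for k
    using gap_le_neighbour_weights[where \<tau>=\<tau> and f="\<alpha> \<circ> Rb" and w=w, OF _ _ w _ _ that] ascent swapped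
      display_pair_swaps_permutes pair_swaps_moves_by_one
    unfolding \<tau>_def by simp
  have "attr_gap K \<alpha> (Rb \<circ> \<tau>) = (\<Sum>k=1..K-1. max (\<alpha> (Rb (\<tau> (Suc k))) - \<alpha> (Rb (\<tau> k))) 0)"
    unfolding attr_gap_def by simp
  also have "\<dots> \<le> (\<Sum>k=1..K-1. w (k - 1) + w k + w (Suc k))" by (rule sum_mono) (use gap in auto)
  also have "\<dots> \<le> 3 * (\<Sum>m\<le>K. w m)" by (rule sum_neighbours_le[OF w])
  also have "(\<Sum>m\<le>K. w m) = (\<Sum>m=1..K-1. ?g (min (Rb m) (Rb (Suc m))) (max (Rb m) (Rb (Suc m))))"
    by (rule sum.mono_neutral_cong_right) (auto simp: w_def)
  also have "\<dots> \<le> (\<Sum>i=1..K. \<Sum>j=i+1..K. ?g i j)"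
    by (rule sum_adjacent_le_sum_pairs[OF Rb P_weight_nonneg[OF alpha_dec]])
  finally show ?thesis unfolding R by (simp only: P_weight_def)
qed

theorem lemma3:
  fixes K N :: nat and \<delta> :: real
    and \<alpha> :: "nat \<Rightarrow> real" and \<chi> :: "(nat \<Rightarrow> nat) \<Rightarrow> nat \<Rightarrow> real"
    and R0 :: "nat \<Rightarrow> nat"
    and coin :: "nat \<Rightarrow> nat \<Rightarrow> bool"
    and A :: "nat \<Rightarrow> nat \<Rightarrow> bool"
    and X :: "nat \<Rightarrow> (nat \<Rightarrow> nat) \<Rightarrow> nat \<Rightarrow> bool"
  assumes delta: "0 < \<delta>" "\<delta> < 1"
    and R0: "R0 \<in> lists_K K"
    and alpha_dec: "\<forall>i\<in>{1..K}. \<forall>j\<in>{1..K}. i < j \<longrightarrow> \<alpha> j < \<alpha> i"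
    and alpha_pos: "\<alpha> K > 0"
    and alpha_le1: "\<forall>i\<in>{1..K}. \<alpha> i \<le> 1"
    and chi_range: "\<forall>R\<in>lists_K K. \<forall>k\<in>{1..K}. 0 \<le> \<chi> R k \<and> \<chi> R k \<le> 1"
    and A1: "\<forall>R\<in>lists_K K. reward K \<alpha> \<chi> R \<le> reward K \<alpha> \<chi> id"
    and A2: "\<forall>R\<in>lists_K K. \<forall>R'\<in>lists_K K. \<forall>k\<in>{1..K}.
               R ` {1..<k} = R' ` {1..<k} \<longrightarrow> \<chi> R k = \<chi> R' k"
    and A3: "\<forall>R\<in>lists_K K. \<forall>k\<in>{1..K}. \<forall>l\<in>{1..K}. k < l \<longrightarrow> \<chi> R l \<le> \<chi> R k"
    and A4: "\<forall>R\<in>lists_K K. \<forall>k\<in>{1..K}. \<forall>l\<in>{1..K}. k < l \<longrightarrow>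
               (\<alpha> (R k) \<le> \<alpha> (R l) \<longleftrightarrow> \<chi> (swap_pos R k l) l \<le> \<chi> R l)"
    and A5: "\<forall>R\<in>lists_K K. \<forall>k\<in>{1..K}. \<chi> id k \<le> \<chi> R k"
    and E: "event_E K \<delta> \<alpha> N (s_at K \<delta> R0 coin A X) (n_at K \<delta> R0 coin A X)"
    and t: "t \<in> {1..N}"
  shows "Max (attr_gap K \<alpha> ` displayable K \<delta> (t mod 2) (Rbar_at K \<delta> R0 coin A X t)
                 (s_at K \<delta> R0 coin A X (t - 1)) (n_at K \<delta> R0 coin A X (t - 1)))
         \<le> 3 * (\<Sum>i=1..K. \<Sum>j=i+1..K.
                 (if (i, j) \<in> P_set K \<delta> (Rbar_at K \<delta> R0 coin A X t)
                        (s_at K \<delta> R0 coin A X (t - 1)) (n_at K \<delta> R0 coin A X (t - 1))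
                  then 1 else 0) * (\<alpha> i - \<alpha> j))"
proof -
  define Rb s n where "Rb = Rbar_at K \<delta> R0 coin A X t"
    and "s = s_at K \<delta> R0 coin A X (t - 1)" and "n = n_at K \<delta> R0 coin A X (t - 1)"
  have "R0 permutes {1..K}" using R0 unfolding lists_K_def by simp
  moreover have "\<forall>u\<in>{1..N}. event_E2 K \<delta> (s_at K \<delta> R0 coin A X u) (n_at K \<delta> R0 coin A X u)"
    using E unfolding event_E_def event_E2_def not_beats_iff by blast
  moreover have "Suc (t - 1) = t" "t - 1 \<le> N" using t by auto
  ultimately have Rb: "Rb permutes {1..K}" and inv: "inversions_unconfirmed K \<delta> Rb s n"
    using BubbleRank_invariant[of R0 K N \<delta> coin A X "t - 1"] unfolding Rb_def s_def n_def by auto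
  let ?shown = "displayable K \<delta> (t mod 2) Rb s n"
  have "?shown \<subseteq> {R. R permutes {1..K}}"
    unfolding displayable_def using display_list_permutes[OF Rb] by auto
  then have "finite ?shown" by (rule finite_subset) (simp add: finite_permutations)
  moreover have "?shown \<noteq> {}" unfolding displayable_def by auto
  ultimately show ?thesis
    unfolding Rb_def[symmetric] s_def[symmetric] n_def[symmetric]
    using attr_gap_display_list_le[OF Rb inv alpha_dec]
    by (intro Max.boundedI) (auto simp: displayable_def)
qed

end
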